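(* For every $n\geq 1$, there exists an NFA $M$ with $n+1$ states over a three-letter alphabet $\Sigma$, with a single initial state and all states final, such that any NFA accepting the complement $\Sigma^*\setminus L(M)$ has at least $2^n$ states.
   Context: An NFA is a quintuple $M=(Q,\Sigma,\delta,q_0,F)$ with finite state set $Q$, transition function $\delta: Q\times\Sigma\to 2^Q$, initial state $q_0$ and final states $F$; $L(M)$ is the set of words $w$ with $\delta(q_0,w)\cap F\ne\emptyset$. *)

theory Defs
  imports Main
begin

text \<open>An NFA (Q, delta, q0, F) with states taken from nat (any finite state set can be
renamed into nat) and letters of type 'a; the alphabet Alph is a separate set.\<close>

record 'a nfa =
  states :: "nat set"
  delta  :: "nat \<Rightarrow> 'a \<Rightarrow> nat set"
  init   :: nat
  final  :: "nat set"

definition wf_nfa :: "'a set \<Rightarrow> 'a nfa \<Rightarrow> bool" where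
  "wf_nfa Alph M \<longleftrightarrow> finite (states M) \<and> init M \<in> states M \<and> final M \<subseteq> states M
     \<and> (\<forall>q\<in>states M. \<forall>a\<in>Alph. delta M q a \<subseteq> states M)"

fun delta_star :: "'a nfa \<Rightarrow> nat set \<Rightarrow> 'a list \<Rightarrow> nat set" where
  "delta_star M S [] = S"
| "delta_star M S (a # w) = delta_star M (\<Union>q\<in>S. delta M q a) w"

definition lang :: "'a set \<Rightarrow> 'a nfa \<Rightarrow> 'a list set" where
  "lang Alph M = {w \<in> lists Alph. delta_star M {init M} w \<inter> final M \<noteq> {}}"

end

theory Submission
  imports Defs
begin

text \<open>The witness has an initial state \<open>n\<close> and a cycle \<open>0 \<rightarrow> 1 \<rightarrow> \<dots> \<rightarrow> n - 1 \<rightarrow> 0\<close>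
  driven by letter 0; from \<open>n\<close> letter 0 also enters the cycle. Letter 1 deletes state 0,
  letter 2 deletes state \<open>n\<close>, and all other transitions are loops. Reading \<open>0\<^sup>n 2\<close> reaches
  the whole cycle, and rotating a state to 0, deleting it with 1 and rotating back removes any
  single state; so every subset \<open>S\<close> of the cycle is reachable by some word \<open>x\<^sub>S\<close>, and some
  word \<open>y\<^sub>T\<close> deletes exactly \<open>T\<close>. As every state is final, \<open>x\<^sub>S y\<^sub>T\<close> is rejected iff
  \<open>S \<subseteq> T\<close>. Hence the \<open>2\<^sup>n\<close> pairs \<open>(x\<^sub>S, y\<^sub>S)\<close> form an extended fooling set for the complement,
  which forces \<open>2\<^sup>n\<close> states on every NFA accepting it.\<close>

lemma delta_star_append:
  "delta_star M S (xs @ ys) = delta_star M (delta_star M S xs) ys"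
  by (induction xs arbitrary: S) auto

lemma delta_star_empty [simp]: "delta_star M {} w = {}"
  by (induction w) auto

lemma delta_star_UN_singleton: "delta_star M S w = (\<Union>q\<in>S. delta_star M {q} w)"
proof (induction w arbitrary: S)
  case Nil
  then show ?case by auto
next
  case (Cons a w)
  have "delta_star M S (a # w) = (\<Union>p\<in>(\<Union>q\<in>S. delta M q a). delta_star M {p} w)"
    using Cons.IH[of "\<Union>q\<in>S. delta M q a"] by simp
  also have "\<dots> = (\<Union>q\<in>S. delta_star M (delta M q a) w)"
    using Cons.IH[of "delta M _ a"] by blast
  finally show ?case by simp
qed

lemma delta_star_subset_states:
  assumes "wf_nfa Alph M" "S \<subseteq> states M" "w \<in> lists Alph"
  shows "delta_star M S w \<subseteq> states M"
  using assms(2,3)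
proof (induction w arbitrary: S)
  case Nil
  then show ?case by simp
next
  case (Cons a w)
  have "a \<in> Alph" using Cons.prems(2) by simp
  then have "(\<Union>q\<in>S. delta M q a) \<subseteq> states M"
    using assms(1) Cons.prems(1) unfolding wf_nfa_def by blast
  then show ?case using Cons by simp
qed

lemma lang_all_final:
  assumes "wf_nfa Alph M" "final M = states M"
  shows "lang Alph M = {w \<in> lists Alph. delta_star M {init M} w \<noteq> {}}"
proof -
  have "delta_star M {init M} w \<inter> final M = delta_star M {init M} w" if "w \<in> lists Alph" for w
    using delta_star_subset_states[OF assms(1) _ that] assms unfolding wf_nfa_def by auto
  then show ?thesis unfolding lang_def by auto
qed

lemma append_in_lang_iff:
  "x @ y \<in> lang Alph M \<longleftrightarrow>
     x @ y \<in> lists Alph \<and> (\<exists>p\<in>delta_star M {init M} x. delta_star M {p} y \<inter> final M \<noteq> {})"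
proof -
  have "delta_star M {init M} (x @ y) = (\<Union>p\<in>delta_star M {init M} x. delta_star M {p} y)"
    using delta_star_UN_singleton[of M "delta_star M {init M} x" y] by (simp only: delta_star_append)
  then show ?thesis unfolding lang_def by auto
qed

definition fooling_set :: "'a list set \<Rightarrow> ('a list \<times> 'a list) set \<Rightarrow> bool" where
  "fooling_set L P \<longleftrightarrow> (\<forall>(x, y)\<in>P. x @ y \<in> L) \<and>
     (\<forall>(x\<^sub>1, y\<^sub>1)\<in>P. \<forall>(x\<^sub>2, y\<^sub>2)\<in>P. (x\<^sub>1, y\<^sub>1) \<noteq> (x\<^sub>2, y\<^sub>2) \<longrightarrow> x\<^sub>1 @ y\<^sub>2 \<notin> L \<or> x\<^sub>2 @ y\<^sub>1 \<notin> L)"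

text \<open>Each pair is assigned a state between \<open>x\<close> and \<open>y\<close> on an accepting run; two pairs sharing
  that state would make both cross words accepted.\<close>
lemma card_fooling_set_le_card_states:
  assumes wf: "wf_nfa Alph M" and fool: "fooling_set (lang Alph M) P"
  shows "card P \<le> card (states M)"
proof -
  have accepted: "fst u @ snd u \<in> lang Alph M" if "u \<in> P" for u
    using fool that unfolding fooling_set_def by auto
  have "\<exists>p\<in>states M. p \<in> delta_star M {init M} (fst u) \<and> delta_star M {p} (snd u) \<inter> final M \<noteq> {}"
    if u: "u \<in> P" for u
  proof -
    obtain p where p: "p \<in> delta_star M {init M} (fst u)" "delta_star M {p} (snd u) \<inter> final M \<noteq> {}"
      and "fst u \<in> lists Alph"
      using accepted[OF u] unfolding append_in_lang_iff by auto
    moreover have "delta_star M {init M} (fst u) \<subseteq> states M"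
      using delta_star_subset_states[OF wf _ \<open>fst u \<in> lists Alph\<close>] wf unfolding wf_nfa_def by auto
    ultimately show ?thesis by auto
  qed
  then obtain f where f: "\<And>u. u \<in> P \<Longrightarrow> f u \<in> states M \<and>
      f u \<in> delta_star M {init M} (fst u) \<and> delta_star M {f u} (snd u) \<inter> final M \<noteq> {}"
    by metis
  have cross: "fst u @ snd v \<in> lang Alph M" if "u \<in> P" "v \<in> P" "f u = f v" for u v
  proof -
    have "fst u @ snd v \<in> lists Alph"
      using accepted[OF that(1)] accepted[OF that(2)] unfolding lang_def by auto
    with f[OF that(1)] f[OF that(2)] that(3) show ?thesis
      unfolding append_in_lang_iff by metis
  qed
  have "inj_on f P"
  proof (rule inj_onI)
    fix u v assume "u \<in> P" "v \<in> P" "f u = f v"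
    then show "u = v"
      using fool cross[of u v] cross[of v u] unfolding fooling_set_def by fastforce
  qed
  moreover have "f ` P \<subseteq> states M" using f by auto
  moreover have "finite (states M)" using wf unfolding wf_nfa_def by simp
  ultimately show ?thesis by (rule card_inj_on_le)
qed

definition witness_delta :: "nat \<Rightarrow> nat \<Rightarrow> nat \<Rightarrow> nat set" where
  "witness_delta n q a =
     (if q = n then (if a = 0 then {n, 0} else if a = 1 then {n} else {})
      else if q < n then (if a = 0 then {Suc q mod n} else if a = 1 \<and> q = 0 then {} else {q})
      else {})"

definition witness_nfa :: "nat \<Rightarrow> nat nfa" where
  "witness_nfa n = \<lparr>states = {..n}, delta = witness_delta n, init = n, final = {..n}\<rparr>"

lemma witness_nfa_simps [simp]:
  "states (witness_nfa n) = {..n}" "delta (witness_nfa n) = witness_delta n"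
  "init (witness_nfa n) = n" "final (witness_nfa n) = {..n}"
  by (simp_all add: witness_nfa_def)

lemma wf_witness_nfa: "wf_nfa Alph (witness_nfa n)"
  unfolding wf_nfa_def by (auto simp: witness_delta_def split: if_splits)

lemma lang_witness_nfa:
  "lang Alph (witness_nfa n) = {w \<in> lists Alph. delta_star (witness_nfa n) {n} w \<noteq> {}}"
  using lang_all_final[OF wf_witness_nfa] by simp

lemma witness_rotate:
  "q < n \<Longrightarrow> delta_star (witness_nfa n) {q} (replicate k 0) = {(q + k) mod n}"
proof (induction k arbitrary: q)
  case 0
  then show ?case by simp
next
  case (Suc k)
  then have "delta_star (witness_nfa n) {q} (replicate (Suc k) 0) = {(Suc q mod n + k) mod n}"
    by (simp add: witness_delta_def)
  then show ?case by (simp add: mod_add_left_eq)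
qed

lemma mod_add_diff_cases:
  fixes n q s :: nat
  assumes "s < n" "q < n"
  shows "(q + (n - s)) mod n = (if s \<le> q then q - s else q + n - s)"
proof (cases "s \<le> q")
  case True
  then have "q + (n - s) = (q - s) + n" using assms by simp
  then show ?thesis using assms True by (metis mod_add_self2 mod_less diff_le_self le_less_trans)
qed (use assms in simp)

definition delete_word :: "nat \<Rightarrow> nat \<Rightarrow> nat list" where
  "delete_word n s = replicate (n - s) 0 @ [1] @ replicate s 0"

text \<open>The word rotates \<open>s\<close> onto state 0, deletes it, and rotates the cycle back.\<close>
lemma witness_delete_word_singleton:
  assumes "s < n" "q < n"
  shows "delta_star (witness_nfa n) {q} (delete_word n s) = (if q = s then {} else {q})"
proof -
  define r where "r = (q + (n - s)) mod n"
  have r: "r = (if s \<le> q then q - s else q + n - s)"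
    unfolding r_def using assms by (rule mod_add_diff_cases)
  have "r < n" "r = 0 \<longleftrightarrow> q = s" "(r + s) mod n = q"
    using r assms by auto
  have "delta_star (witness_nfa n) {q} (delete_word n s) =
        delta_star (witness_nfa n) (delta_star (witness_nfa n) {r} [1]) (replicate s 0)"
    using witness_rotate[OF \<open>q < n\<close>, of "n - s"]
    by (simp add: delete_word_def delta_star_append r_def)
  also have "\<dots> = (if q = s then {} else {q})"
    using \<open>r < n\<close> \<open>r = 0 \<longleftrightarrow> q = s\<close> \<open>(r + s) mod n = q\<close> witness_rotate[OF \<open>r < n\<close>, of s]
    by (auto simp: witness_delta_def)
  finally show ?thesis .
qed

lemma witness_delete_word:
  assumes "s < n" "A \<subseteq> {..<n}"
  shows "delta_star (witness_nfa n) A (delete_word n s) = A - {s}"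
proof -
  have "delta_star (witness_nfa n) A (delete_word n s) = (\<Union>q\<in>A. if q = s then {} else {q})"
    unfolding delta_star_UN_singleton[of _ A]
    using witness_delete_word_singleton[OF assms(1)] assms(2) by (intro SUP_cong) auto
  then show ?thesis by auto
qed

lemma witness_deletes_subset:
  assumes "T \<subseteq> {..<n}"
  shows "\<exists>y. y \<in> lists {0, 1, 2} \<and> (\<forall>A\<subseteq>{..<n}. delta_star (witness_nfa n) A y = A - T)"
proof -
  have "finite T" using assms finite_subset by blast
  then show ?thesis using assms
  proof (induction T rule: finite_induct)
    case empty
    show ?case by (rule exI[of _ "[]"]) auto
  next
    case (insert s T)
    then obtain y where y: "y \<in> lists {0, 1, 2}"
      "\<And>A. A \<subseteq> {..<n} \<Longrightarrow> delta_star (witness_nfa n) A y = A - T"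
      by auto
    have "delta_star (witness_nfa n) A (delete_word n s @ y) = A - insert s T"
      if "A \<subseteq> {..<n}" for A
      using that insert.prems y(2)[of "A - {s}"]
      by (auto simp: delta_star_append witness_delete_word)
    moreover have "delete_word n s @ y \<in> lists {0, 1, 2}"
      using y(1) by (auto simp: delete_word_def)
    ultimately show ?case by blast
  qed
qed

lemma witness_fill:
  "k \<le> n \<Longrightarrow> delta_star (witness_nfa n) {n} (replicate k 0) = insert n {..<k}"
proof (induction k)
  case 0
  then show ?case by simp
next
  case (Suc k)
  have "delta_star (witness_nfa n) {n} (replicate (Suc k) 0) =
        (\<Union>q\<in>insert n {..<k}. witness_delta n q 0)"
    using Suc by (simp add: replicate_append_same[symmetric] delta_star_append)
  also have "\<dots> = insert n (insert 0 (Suc ` {..<k}))"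
    using Suc.prems by (auto simp: witness_delta_def)
  finally show ?case by (simp add: lessThan_Suc_eq_insert_0)
qed

lemma witness_reaches_subset:
  assumes "S \<subseteq> {..<n}"
  shows "\<exists>x. x \<in> lists {0, 1, 2} \<and> delta_star (witness_nfa n) {n} x = S"
proof -
  obtain y where y: "y \<in> lists {0, 1, 2}"
    "\<forall>A\<subseteq>{..<n}. delta_star (witness_nfa n) A y = A - ({..<n} - S)"
    using witness_deletes_subset[of "{..<n} - S" n] by auto
  have fill: "delta_star (witness_nfa n) {n} (replicate n 0 @ [2]) = {..<n}"
    using witness_fill[of n n] by (auto simp: delta_star_append witness_delta_def)
  have "delta_star (witness_nfa n) {n} ((replicate n 0 @ [2]) @ y) = {..<n} - ({..<n} - S)"
    unfolding delta_star_append[of _ _ "replicate n 0 @ [2]" y] fill using y(2) by blast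
  also have "\<dots> = S" using assms by blast
  finally show ?thesis using y(1) by (intro exI[of _ "(replicate n 0 @ [2]) @ y"]) auto
qed

lemma card_states_complement_witness:
  assumes wf: "wf_nfa {0, 1, 2} M"
    and compl: "lang {0, 1, 2} M = lists {0, 1, 2} - lang {0, 1, 2} (witness_nfa n)"
  shows "2 ^ n \<le> card (states M)"
proof -
  obtain reach where reach: "\<And>S. S \<subseteq> {..<n} \<Longrightarrow>
      reach S \<in> lists {0, 1, 2} \<and> delta_star (witness_nfa n) {n} (reach S) = S"
    using witness_reaches_subset[of _ n] by metis
  obtain del where del: "\<And>T. T \<subseteq> {..<n} \<Longrightarrow>
      del T \<in> lists {0, 1, 2} \<and> (\<forall>A\<subseteq>{..<n}. delta_star (witness_nfa n) A (del T) = A - T)"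
    using witness_deletes_subset[of _ n] by metis
  define L where "L = lang {0, 1, 2} M"
  have in_compl: "reach S @ del T \<in> L \<longleftrightarrow> S \<subseteq> T"
    if "S \<subseteq> {..<n}" "T \<subseteq> {..<n}" for S T
  proof -
    have "delta_star (witness_nfa n) {n} (reach S @ del T) = S - T"
      using reach[OF that(1)] del[OF that(2)] that(1) by (simp add: delta_star_append)
    moreover have "reach S @ del T \<in> lists {0, 1, 2}"
      using reach[OF that(1)] del[OF that(2)] by simp
    ultimately show ?thesis unfolding L_def compl lang_witness_nfa by blast
  qed
  let ?P = "(\<lambda>S. (reach S, del S)) ` Pow {..<n}"
  have "fooling_set L ?P"
    unfolding fooling_set_def by (force simp: in_compl)
  then have "card ?P \<le> card (states M)"
    unfolding L_def by (rule card_fooling_set_le_card_states[OF wf])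
  moreover have "inj_on (\<lambda>S. (reach S, del S)) (Pow {..<n})"
  proof (rule inj_onI)
    fix S T assume "S \<in> Pow {..<n}" "T \<in> Pow {..<n}" "(reach S, del S) = (reach T, del T)"
    then have "reach S = reach T" by simp
    then show "S = T" using reach \<open>S \<in> Pow {..<n}\<close> \<open>T \<in> Pow {..<n}\<close> by (metis PowD)
  qed
  ultimately show ?thesis by (simp add: card_image card_Pow)
qed

text \<open>The construction does not need \<open>n \<ge> 1\<close>.\<close>
theorem mainTheorem15:
  fixes n :: nat
  assumes "n \<ge> 1"
  shows "\<exists>(Alph :: nat set) (M :: nat nfa).
           card Alph = 3 \<and> wf_nfa Alph M \<and> card (states M) = n + 1 \<and> final M = states M \<and>
           (\<forall>M' :: nat nfa. wf_nfa Alph M' \<and> lang Alph M' = lists Alph - lang Alph M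
              \<longrightarrow> card (states M') \<ge> 2 ^ n)"
proof (intro exI[of _ "{0, 1, 2}"] exI[of _ "witness_nfa n"] conjI allI impI)
  show "card {0, 1, 2 :: nat} = 3" by simp
  show "wf_nfa {0, 1, 2} (witness_nfa n)" by (rule wf_witness_nfa)
  show "card (states (witness_nfa n)) = n + 1" by simp
  show "final (witness_nfa n) = states (witness_nfa n)" by simp
  fix M' :: "nat nfa"
  assume "wf_nfa {0, 1, 2} M' \<and> lang {0, 1, 2} M' = lists {0, 1, 2} - lang {0, 1, 2} (witness_nfa n)"
  then show "2 ^ n \<le> card (states M')"
    using card_states_complement_witness by blast
qed

end
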